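(* Let $C_1$ and $C_2$ be maximal configurations of finite labeled prime event structures $\mathcal{E}_1$ and $\mathcal{E}_2$ with labelings $h_1,h_2$, and suppose that for every $e_1\in C_1$ and $e_2\in C_2$ we have $|\{e\in C_1\mid h_1(e_1)=h_1(e)\}|=1$ and $|\{e\in C_2\mid h_2(e_2)=h_2(e)\}|=1$. If $\mathcal{L}(C_1)\subseteq\mathcal{L}(C_2)$, then $C_1\sqsubset_S C_2$.
   Context: A finite $\mathcal{X}$-labeled prime event structure is $\langle E,<,\#,h\rangle$ with finite $E$, strict partial order $<$, labeling $h:E\to\mathcal{X}$, and symmetric irreflexive conflict relation $\#$ closed under $<$; $\mathcal{X}$ contains $\varepsilon$ denoting the empty word; there is an event $\bot$ below all other events with $h(\bot)=\varepsilon$. A configuration is a left-closed, conflict-free subset of $E$; maximal if no configuration strictly contains it. A trace of a configuration $C$ lists every event of $C$ exactly once such that $e_i<e_j$ implies $i<j$; $\mathcal{L}(C)=\{h(t)\mid t$ a trace of $C\}$ (labels pointwise, $\varepsilon$ omitted). With causal orders $<_1,<_2$, a sufficient embedding $\varphi:C_1\to C_2$ is a bijection with $h_1(e)=h_2(\varphi(e))$ for all $e\in C_1$ and such that $\varphi(e_1)<_2\varphi(e_2)$ implies $e_1<_1e_2$; $C_1\sqsubset_S C_2$ means such an embedding exists. *)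

theory Defs
  imports Main
begin

text \<open>A finite X-labeled prime event structure, given by its event set E, causal
order lt (strict partial order), conflict relation confl, labeling h, the
distinguished empty-word label eps, and the bottom event b0.\<close>

definition prime_es ::
  "'e set \<Rightarrow> ('e \<Rightarrow> 'e \<Rightarrow> bool) \<Rightarrow> ('e \<Rightarrow> 'e \<Rightarrow> bool) \<Rightarrow> ('e \<Rightarrow> 'x) \<Rightarrow> 'x \<Rightarrow> 'e \<Rightarrow> bool"
where
  "prime_es E lt confl h eps b0 \<longleftrightarrow>
     finite E \<and>
     (\<forall>x y. lt x y \<longrightarrow> x \<in> E \<and> y \<in> E) \<and>
     (\<forall>x. \<not> lt x x) \<and>
     (\<forall>x y z. lt x y \<longrightarrow> lt y z \<longrightarrow> lt x z) \<and>
     (\<forall>x y. confl x y \<longrightarrow> x \<in> E \<and> y \<in> E) \<and>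
     (\<forall>x y. confl x y \<longrightarrow> confl y x) \<and>
     (\<forall>x. \<not> confl x x) \<and>
     (\<forall>x y z. confl x y \<longrightarrow> lt y z \<longrightarrow> confl x z) \<and>
     b0 \<in> E \<and> h b0 = eps \<and>
     (\<forall>e\<in>E. e \<noteq> b0 \<longrightarrow> lt b0 e)"

definition configuration ::
  "'e set \<Rightarrow> ('e \<Rightarrow> 'e \<Rightarrow> bool) \<Rightarrow> ('e \<Rightarrow> 'e \<Rightarrow> bool) \<Rightarrow> 'e set \<Rightarrow> bool"
where
  "configuration E lt confl C \<longleftrightarrow>
     C \<subseteq> E \<and>
     (\<forall>e\<in>C. \<forall>e'\<in>E. lt e' e \<longrightarrow> e' \<in> C) \<and>
     (\<forall>e\<in>C. \<forall>e'\<in>C. \<not> confl e e')"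

definition maximal_configuration ::
  "'e set \<Rightarrow> ('e \<Rightarrow> 'e \<Rightarrow> bool) \<Rightarrow> ('e \<Rightarrow> 'e \<Rightarrow> bool) \<Rightarrow> 'e set \<Rightarrow> bool"
where
  "maximal_configuration E lt confl C \<longleftrightarrow>
     configuration E lt confl C \<and>
     \<not> (\<exists>C'. configuration E lt confl C' \<and> C \<subset> C')"

definition is_trace :: "('e \<Rightarrow> 'e \<Rightarrow> bool) \<Rightarrow> 'e set \<Rightarrow> 'e list \<Rightarrow> bool"
where
  "is_trace lt C t \<longleftrightarrow>
     distinct t \<and> set t = C \<and>
     (\<forall>i<length t. \<forall>j<length t. lt (t ! i) (t ! j) \<longrightarrow> i < j)"

definition label_word :: "('e \<Rightarrow> 'x) \<Rightarrow> 'x \<Rightarrow> 'e list \<Rightarrow> 'x list"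
where
  "label_word h eps t = filter (\<lambda>a. a \<noteq> eps) (map h t)"

definition lang :: "('e \<Rightarrow> 'e \<Rightarrow> bool) \<Rightarrow> ('e \<Rightarrow> 'x) \<Rightarrow> 'x \<Rightarrow> 'e set \<Rightarrow> 'x list set"
where
  "lang lt h eps C = {label_word h eps t | t. is_trace lt C t}"

definition sufficient_embedding ::
  "('e1 \<Rightarrow> 'e1 \<Rightarrow> bool) \<Rightarrow> ('e1 \<Rightarrow> 'x) \<Rightarrow> 'e1 set \<Rightarrow>
   ('e2 \<Rightarrow> 'e2 \<Rightarrow> bool) \<Rightarrow> ('e2 \<Rightarrow> 'x) \<Rightarrow> 'e2 set \<Rightarrow> ('e1 \<Rightarrow> 'e2) \<Rightarrow> bool"
where
  "sufficient_embedding lt1 h1 C1 lt2 h2 C2 \<phi> \<longleftrightarrow>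
     bij_betw \<phi> C1 C2 \<and>
     (\<forall>e\<in>C1. h1 e = h2 (\<phi> e)) \<and>
     (\<forall>e1\<in>C1. \<forall>e2\<in>C1. lt2 (\<phi> e1) (\<phi> e2) \<longrightarrow> lt1 e1 e2)"

definition suff_embeds ::
  "('e1 \<Rightarrow> 'e1 \<Rightarrow> bool) \<Rightarrow> ('e1 \<Rightarrow> 'x) \<Rightarrow> 'e1 set \<Rightarrow>
   ('e2 \<Rightarrow> 'e2 \<Rightarrow> bool) \<Rightarrow> ('e2 \<Rightarrow> 'x) \<Rightarrow> 'e2 set \<Rightarrow> bool"
where
  "suff_embeds lt1 h1 C1 lt2 h2 C2 \<longleftrightarrow> (\<exists>\<phi>. sufficient_embedding lt1 h1 C1 lt2 h2 C2 \<phi>)"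

end

theory Submission
  imports Defs "HOL-Library.Sublist"
begin

(* Every label occurs only once in C1 and in C2, and only the bottom events carry eps, so
   the letters of any word of L(C_i) are exactly the visible labels of C_i.  Hence
   L(C1) <= L(C2) forces h1(C1) = h2(C2), and matching equally labelled events gives a
   label-preserving bijection phi.  If phi a <2 phi b but not a <1 b, then C1 has a trace in
   which b precedes a; its word is also the word of a trace of C2, in which phi a precedes
   phi b.  So the word lists h1 a both before and after h1 b, although its letters are
   distinct. *)

lemma subseq_pair_nth:
  assumes "i < j" "j < length xs"
  shows "subseq [xs ! i, xs ! j] xs"
proof -
  have "subseq [xs ! i] (take j xs)"
    using assms by (simp add: subseq_singleton_left in_set_conv_nth) (metis nth_take)
  moreover have "subseq [xs ! j] (drop j xs)"
    using assms by (simp add: Cons_nth_drop_Suc[symmetric])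
  ultimately have "subseq ([xs ! i] @ [xs ! j]) (take j xs @ drop j xs)"
    by (rule list_emb_append_mono)
  then show ?thesis by simp
qed

lemma distinct_subseq_pair_asym:
  assumes "distinct xs" "subseq [x, y] xs"
  shows "\<not> subseq [y, x] xs"
  using assms
proof (induction xs)
  case (Cons z zs)
  then show ?case by (auto simp: subseq_singleton_left split: if_splits elim!: list_emb_set)
qed simp

lemma is_trace_subseq_pair:
  assumes "is_trace R C t" "x \<in> C" "y \<in> C" "R x y"
  shows "subseq [x, y] t"
proof -
  obtain i j where "i < length t" "j < length t" "t ! i = x" "t ! j = y"
    using assms(1-3) unfolding is_trace_def by (metis in_set_conv_nth)
  moreover have "i < j"
    using assms(1,4) calculation unfolding is_trace_def by blast
  ultimately show ?thesis using subseq_pair_nth by metis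
qed

lemma is_trace_mono:
  assumes "is_trace R C t" "\<And>x y. Q x y \<Longrightarrow> R x y"
  shows "is_trace Q C t"
  using assms unfolding is_trace_def by blast

lemma is_trace_exists:
  assumes "finite C" "irreflp_on C R" "transp_on C R"
  shows "\<exists>t. is_trace R C t"
proof -
  \<comment> \<open>Sorting by the number of \<open>R\<close>-predecessors yields a linear extension.\<close>
  define rank where "rank x = card {z \<in> C. R z x}" for x
  have rank_less: "rank x < rank y" if "x \<in> C" "y \<in> C" "R x y" for x y
  proof -
    have "{z \<in> C. R z x} \<subset> {z \<in> C. R z y}"
      using that assms(2,3) unfolding irreflp_on_def transp_on_def by blast
    then show ?thesis unfolding rank_def by (simp add: assms(1) psubset_card_mono)
  qed
  obtain xs where "distinct xs" "set xs = C"
    using assms(1) finite_distinct_list by blast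
  define t where "t = sort_key rank xs"
  have t: "distinct t" "set t = C" "sorted (map rank t)"
    using \<open>distinct xs\<close> \<open>set xs = C\<close> unfolding t_def by auto
  have "i < j" if "i < length t" "j < length t" "R (t ! i) (t ! j)" for i j
  proof (rule ccontr)
    assume "\<not> i < j"
    then have "rank (t ! j) \<le> rank (t ! i)"
      using t(3) that sorted_nth_mono[of "map rank t" j i] by simp
    moreover have "rank (t ! i) < rank (t ! j)"
      using rank_less that t(2) nth_mem by metis
    ultimately show False by simp
  qed
  then show ?thesis using t(1,2) unfolding is_trace_def by blast
qed

lemma is_trace_exists_subseq_pair:
  assumes "finite C" "irreflp lt" "transp lt" "a \<in> C" "b \<in> C" "a \<noteq> b" "\<not> lt a b"
  shows "\<exists>t. is_trace lt C t \<and> subseq [b, a] t"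
proof -
  \<comment> \<open>\<open>lt\<close> plus the pair \<open>(b, a)\<close>, transitively closed; acyclic because \<open>\<not> lt a b\<close>.\<close>
  define R where "R x y \<longleftrightarrow> lt x y \<or> ((x = b \<or> lt x b) \<and> (a = y \<or> lt a y))" for x y
  have trans: "lt x z" if "lt x y" "lt y z" for x y z
    using assms(3) that by (rule transpD)
  have no_middle: "\<not> ((y = b \<or> lt y b) \<and> (a = y \<or> lt a y))" for y
    using assms(6,7) trans[of a y b] by blast
  have "irreflp R"
    using assms(2) no_middle unfolding R_def irreflp_on_def by blast
  moreover have "transp R"
  proof (rule transpI)
    fix x y z assume "R x y" "R y z"
    then consider "lt x y" "lt y z" | "lt x y" "y = b \<or> lt y b" "a = z \<or> lt a z"
      | "x = b \<or> lt x b" "a = y \<or> lt a y" "lt y z"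
      using no_middle[of y] unfolding R_def by blast
    then show "R x z"
    proof cases
      case 1
      then show ?thesis using trans unfolding R_def by blast
    next
      case 2
      then show ?thesis using trans[of x y b] unfolding R_def by blast
    next
      case 3
      then show ?thesis using trans[of a y z] unfolding R_def by blast
    qed
  qed
  ultimately obtain t where t: "is_trace R C t"
    using is_trace_exists[OF assms(1)] irreflp_on_subset transp_on_subset by blast
  have "is_trace lt C t"
    using t by (rule is_trace_mono) (simp add: R_def)
  moreover have "subseq [b, a] t"
    using t assms(5,4) by (rule is_trace_subseq_pair) (simp add: R_def)
  ultimately show ?thesis by blast
qed

lemma set_label_word: "set (label_word h eps t) = h ` set t - {eps}"
  unfolding label_word_def by auto

lemma distinct_label_word:
  assumes "distinct t" "inj_on h (set t)"
  shows "distinct (label_word h eps t)"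
  unfolding label_word_def using assms by (simp add: distinct_map)

lemma subseq_pair_label_word:
  assumes "subseq [x, y] t" "h x \<noteq> eps" "h y \<noteq> eps"
  shows "subseq [h x, h y] (label_word h eps t)"
proof -
  have "subseq [h x, h y] (map h t)"
    using subseq_map[OF assms(1)] by simp
  then have "subseq (filter (\<lambda>a. a \<noteq> eps) [h x, h y]) (filter (\<lambda>a. a \<noteq> eps) (map h t))"
    by (rule subseq_filter)
  then show ?thesis
    using assms(2,3) unfolding label_word_def by simp
qed

lemma inj_on_if_card_fibres_eq_1:
  assumes "\<forall>x\<in>C. card {y \<in> C. h x = h y} = 1"
  shows "inj_on h C"
proof (rule inj_onI)
  fix x y assume "x \<in> C" "y \<in> C" "h x = h y"
  then have "x \<in> {z \<in> C. h x = h z}" "y \<in> {z \<in> C. h x = h z}" "card {z \<in> C. h x = h z} = 1"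
    using assms by auto
  then show "x = y"
    by (metis card_1_singletonE singletonD)
qed

lemma inv_into_comp_label_matching:
  assumes "inj_on h1 C1" "inj_on h2 C2" "h1 ` C1 = h2 ` C2"
  shows "bij_betw (inv_into C2 h2 \<circ> h1) C1 C2"
    and "e \<in> C1 \<Longrightarrow> h2 ((inv_into C2 h2 \<circ> h1) e) = h1 e"
proof -
  show "bij_betw (inv_into C2 h2 \<circ> h1) C1 C2"
  proof (rule bij_betw_trans)
    show "bij_betw h1 C1 (h2 ` C2)"
      using inj_on_imp_bij_betw[OF assms(1)] assms(3) by simp
    show "bij_betw (inv_into C2 h2) (h2 ` C2) C2"
      using bij_betw_inv_into[OF inj_on_imp_bij_betw[OF assms(2)]] .
  qed
  show "h2 ((inv_into C2 h2 \<circ> h1) e) = h1 e" if "e \<in> C1"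
  proof -
    have "h1 e \<in> h2 ` C2"
      using that assms(3) by blast
    then show ?thesis
      by (simp add: f_inv_into_f)
  qed
qed

lemma lang_subset_reflects_order:
  assumes "finite C1" "irreflp lt1" "transp lt1" "inj_on h1 C1"
    and "lang lt1 h1 eps C1 \<subseteq> lang lt2 h2 eps C2"
    and "a \<in> C1" "b \<in> C1" "a \<noteq> b" "h1 a \<noteq> eps" "h1 b \<noteq> eps"
    and "a' \<in> C2" "b' \<in> C2" "h2 a' = h1 a" "h2 b' = h1 b" "lt2 a' b'"
  shows "lt1 a b"
proof (rule ccontr)
  assume "\<not> lt1 a b"
  then obtain t where t: "is_trace lt1 C1 t" "subseq [b, a] t"
    using is_trace_exists_subseq_pair[OF assms(1-3,6-8)] by blast
  define w where "w = label_word h1 eps t"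
  obtain u where u: "is_trace lt2 C2 u" "w = label_word h2 eps u"
    using assms(5) t(1) unfolding w_def lang_def by blast
  have "distinct w"
    unfolding w_def using t(1) assms(4) unfolding is_trace_def
    by (intro distinct_label_word) simp_all
  moreover have "subseq [h1 b, h1 a] w"
    unfolding w_def using t(2) assms(10,9) by (rule subseq_pair_label_word)
  moreover have "subseq [h1 a, h1 b] w"
  proof -
    have "subseq [a', b'] u"
      using u(1) assms(11,12,15) by (rule is_trace_subseq_pair)
    then have "subseq [h2 a', h2 b'] (label_word h2 eps u)"
      using assms(9,10,13,14) by (intro subseq_pair_label_word) simp_all
    then show ?thesis
      using assms(13,14) u(2) by simp
  qed
  ultimately show False
    by (metis distinct_subseq_pair_asym)
qed

lemma prime_es_strict_order:
  assumes "prime_es E lt confl h eps b0"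
  shows "irreflp lt" "transp lt"
proof -
  have "(\<forall>x. \<not> lt x x) \<and> (\<forall>x y z. lt x y \<longrightarrow> lt y z \<longrightarrow> lt x z)"
    using assms unfolding prime_es_def by blast
  then show "irreflp lt" "transp lt"
    by (auto intro: irreflpI transpI)
qed

lemma prime_es_conflict:
  assumes "prime_es E lt confl h eps b0"
  shows "confl x y \<Longrightarrow> confl y x" "\<not> confl x x" "confl x y \<Longrightarrow> lt y z \<Longrightarrow> confl x z"
proof -
  have "(\<forall>x y. confl x y \<longrightarrow> confl y x) \<and> (\<forall>x. \<not> confl x x) \<and>
      (\<forall>x y z. confl x y \<longrightarrow> lt y z \<longrightarrow> confl x z)"
    using assms unfolding prime_es_def by blast
  then show "confl x y \<Longrightarrow> confl y x" "\<not> confl x x" "confl x y \<Longrightarrow> lt y z \<Longrightarrow> confl x z"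
    by blast+
qed

lemma prime_es_bot:
  assumes "prime_es E lt confl h eps b0"
  shows "b0 \<in> E" "h b0 = eps" "e \<in> E \<Longrightarrow> e \<noteq> b0 \<Longrightarrow> lt b0 e" "\<not> lt x b0"
proof -
  have bot: "b0 \<in> E \<and> h b0 = eps \<and> (\<forall>e\<in>E. e \<noteq> b0 \<longrightarrow> lt b0 e)"
    and dom: "\<forall>x y. lt x y \<longrightarrow> x \<in> E \<and> y \<in> E"
    using assms unfolding prime_es_def by blast+
  then show "b0 \<in> E" "h b0 = eps" "e \<in> E \<Longrightarrow> e \<noteq> b0 \<Longrightarrow> lt b0 e"
    by blast+
  show "\<not> lt x b0"
  proof
    assume "lt x b0"
    moreover from this have "lt b0 x" if "x \<noteq> b0"
      using bot dom that by blast
    ultimately show False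
      using irreflpD[OF prime_es_strict_order(1)[OF assms]]
        transpD[OF prime_es_strict_order(2)[OF assms]] by metis
  qed
qed

lemma configuration_finite:
  assumes "prime_es E lt confl h eps b0" "configuration E lt confl C"
  shows "finite C"
proof (rule finite_subset)
  show "C \<subseteq> E"
    using assms(2) unfolding configuration_def by blast
  show "finite E"
    using assms(1) unfolding prime_es_def by blast
qed

lemma configuration_is_trace_exists:
  assumes "prime_es E lt confl h eps b0" "configuration E lt confl C"
  shows "\<exists>t. is_trace lt C t"
proof (rule is_trace_exists)
  show "finite C"
    using assms by (rule configuration_finite)
  show "irreflp_on C lt" "transp_on C lt"
    using prime_es_strict_order[OF assms(1)] irreflp_on_subset transp_on_subset by blast+
qed

lemma maximal_configuration_bot:
  assumes P: "prime_es E lt confl h eps b0" and M: "maximal_configuration E lt confl C"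
  shows "b0 \<in> C"
proof (rule ccontr)
  assume "b0 \<notin> C"
  have C: "C \<subseteq> E" "\<forall>e\<in>C. \<forall>e'\<in>E. lt e' e \<longrightarrow> e' \<in> C"
      "\<forall>e\<in>C. \<forall>e'\<in>C. \<not> confl e e'"
    using M unfolding maximal_configuration_def configuration_def by blast+
  have "\<not> confl b0 e \<and> \<not> confl e b0" if "e \<in> C" for e
  proof -
    have "lt b0 e"
      using prime_es_bot(3)[OF P] C(1) that \<open>b0 \<notin> C\<close> by blast
    then show ?thesis
      using prime_es_conflict[OF P] by metis
  qed
  then have "configuration E lt confl (insert b0 C)"
    using C prime_es_bot(1,4)[OF P] prime_es_conflict(2)[OF P]
    unfolding configuration_def by blast
  moreover have "C \<subset> insert b0 C"
    using \<open>b0 \<notin> C\<close> by blast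
  ultimately show False
    using M unfolding maximal_configuration_def by blast
qed

lemma label_eq_eps_iff:
  assumes "prime_es E lt confl h eps b0" "maximal_configuration E lt confl C"
    and "inj_on h C" "e \<in> C"
  shows "h e = eps \<longleftrightarrow> e = b0"
  using inj_on_eq_iff[OF assms(3,4) maximal_configuration_bot[OF assms(1,2)]] prime_es_bot(2)[OF assms(1)]
  by simp

lemma label_image_eq_if_lang_subset:
  assumes P1: "prime_es E1 lt1 confl1 h1 eps bot1" and P2: "prime_es E2 lt2 confl2 h2 eps bot2"
    and M1: "maximal_configuration E1 lt1 confl1 C1" and M2: "maximal_configuration E2 lt2 confl2 C2"
    and lang: "lang lt1 h1 eps C1 \<subseteq> lang lt2 h2 eps C2"
  shows "h1 ` C1 = h2 ` C2"
proof -
  obtain t where t: "is_trace lt1 C1 t"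
    using configuration_is_trace_exists[OF P1] M1 unfolding maximal_configuration_def by blast
  then obtain u where u: "is_trace lt2 C2 u" "label_word h1 eps t = label_word h2 eps u"
    using lang unfolding lang_def by blast
  have "h1 ` C1 - {eps} = set (label_word h1 eps t)"
    using t by (simp add: set_label_word is_trace_def)
  also have "\<dots> = h2 ` C2 - {eps}"
    using u by (simp add: set_label_word is_trace_def)
  finally have "h1 ` C1 - {eps} = h2 ` C2 - {eps}" .
  moreover have "eps \<in> h1 ` C1" "eps \<in> h2 ` C2"
    using maximal_configuration_bot[OF P1 M1] maximal_configuration_bot[OF P2 M2]
      prime_es_bot(2)[OF P1] prime_es_bot(2)[OF P2] by (metis image_eqI)+
  ultimately show ?thesis
    by (metis insert_Diff)
qed

lemma label_preserving_map_reflects_order: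
  assumes P1: "prime_es E1 lt1 confl1 h1 eps bot1" and P2: "prime_es E2 lt2 confl2 h2 eps bot2"
    and M1: "maximal_configuration E1 lt1 confl1 C1" and M2: "maximal_configuration E2 lt2 confl2 C2"
    and inj: "inj_on h1 C1" "inj_on h2 C2"
    and lang: "lang lt1 h1 eps C1 \<subseteq> lang lt2 h2 eps C2"
    and \<phi>: "\<And>e. e \<in> C1 \<Longrightarrow> \<phi> e \<in> C2 \<and> h2 (\<phi> e) = h1 e"
    and ab: "a \<in> C1" "b \<in> C1" "lt2 (\<phi> a) (\<phi> b)"
  shows "lt1 a b"
proof -
  have "a \<noteq> b"
    using ab(3) irreflpD[OF prime_es_strict_order(1)[OF P2]] by blast
  have C1: "C1 \<subseteq> E1" "finite C1"
    using M1 configuration_finite[OF P1] unfolding maximal_configuration_def configuration_def by simp_all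
  show ?thesis
  proof (cases "a = bot1")
    case True
    then show ?thesis
      using prime_es_bot(3)[OF P1] C1(1) ab(2) \<open>a \<noteq> b\<close> by blast
  next
    case False
    then have "h1 a \<noteq> eps"
      using label_eq_eps_iff[OF P1 M1 inj(1) ab(1)] by blast
    have "\<phi> b \<noteq> bot2"
      using ab(3) prime_es_bot(4)[OF P2] by metis
    then have "h1 b \<noteq> eps"
      using label_eq_eps_iff[OF P2 M2 inj(2)] \<phi>[OF ab(2)] by metis
    have "\<phi> a \<in> C2" "\<phi> b \<in> C2" "h2 (\<phi> a) = h1 a" "h2 (\<phi> b) = h1 b"
      using \<phi> ab(1,2) by simp_all
    from lang_subset_reflects_order[OF C1(2) prime_es_strict_order[OF P1] inj(1) lang ab(1,2)
        \<open>a \<noteq> b\<close> \<open>h1 a \<noteq> eps\<close> \<open>h1 b \<noteq> eps\<close> this ab(3)]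
    show ?thesis .
  qed
qed

theorem lemma10:
  fixes E1 :: "'e1 set" and lt1 confl1 :: "'e1 \<Rightarrow> 'e1 \<Rightarrow> bool" and h1 :: "'e1 \<Rightarrow> 'x"
    and bot1 :: 'e1
    and E2 :: "'e2 set" and lt2 confl2 :: "'e2 \<Rightarrow> 'e2 \<Rightarrow> bool" and h2 :: "'e2 \<Rightarrow> 'x"
    and bot2 :: 'e2 and eps :: 'x and C1 :: "'e1 set" and C2 :: "'e2 set"
  assumes "prime_es E1 lt1 confl1 h1 eps bot1"
    and "prime_es E2 lt2 confl2 h2 eps bot2"
    and "maximal_configuration E1 lt1 confl1 C1"
    and "maximal_configuration E2 lt2 confl2 C2"
    and "\<forall>e1\<in>C1. card {e\<in>C1. h1 e1 = h1 e} = 1"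
    and "\<forall>e2\<in>C2. card {e\<in>C2. h2 e2 = h2 e} = 1"
    and "lang lt1 h1 eps C1 \<subseteq> lang lt2 h2 eps C2"
  shows "suff_embeds lt1 h1 C1 lt2 h2 C2"
proof -
  have inj: "inj_on h1 C1" "inj_on h2 C2"
    using inj_on_if_card_fibres_eq_1 assms(5,6) by blast+
  have img: "h1 ` C1 = h2 ` C2"
    using label_image_eq_if_lang_subset[OF assms(1-4,7)] .
  define \<phi> where "\<phi> = inv_into C2 h2 \<circ> h1"
  have bij: "bij_betw \<phi> C1 C2" and label: "\<And>e. e \<in> C1 \<Longrightarrow> h2 (\<phi> e) = h1 e"
    unfolding \<phi>_def using inv_into_comp_label_matching[OF inj img] by simp_all
  have "sufficient_embedding lt1 h1 C1 lt2 h2 C2 \<phi>"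
    unfolding sufficient_embedding_def
  proof (intro conjI ballI impI)
    show "bij_betw \<phi> C1 C2" by (fact bij)
    show "h1 e = h2 (\<phi> e)" if "e \<in> C1" for e
      using label[OF that] by simp
    show "lt1 a b" if "a \<in> C1" "b \<in> C1" "lt2 (\<phi> a) (\<phi> b)" for a b
      using label_preserving_map_reflects_order[OF assms(1-4) inj assms(7)] bij_betw_apply[OF bij]
        label that by blast
  qed
  then show ?thesis
    unfolding suff_embeds_def by blast
qed

end
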